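(* Let $n\ge 1$ and $k\ge 1$ be integers and let $m=kn+1$ or $m=kn-1$ (with $m\ge 1$). Then the map $\Delta\mapsto G_m(\Delta)$ is a bijection from the set of zero-normalized $\Gamma_{m,n}$-semimodules onto $Y_{m,n}$.
   Context: Let $m,n$ be coprime positive integers and $\Gamma_{m,n}=\{am+bn: a,b\in\mathbb{Z}_{\ge0}\}$. A $\Gamma_{m,n}$-semimodule is a subset $\Delta\subset\mathbb{Z}_{\ge0}$ with $\Delta+\Gamma_{m,n}\subset\Delta$; it is zero-normalized if $\min\Delta=0$. An $m$-generator of $\Delta$ is an element $a\in\Delta$ with $a-m\notin\Delta$; there are exactly $m$ of them, $a_1<\dots<a_m$. Put $g_m(x)=\#\big(([x,x+n)\cap\mathbb{Z})\setminus\Delta\big)$. The numbers $g_m(a_1)\ge g_m(a_2)\ge\dots\ge g_m(a_m)$ are weakly decreasing, and $G_m(\Delta)$ denotes the Young diagram whose column heights are $g_m(a_1),\dots,g_m(a_m)$. $Y_{m,n}$ denotes the set of Young diagrams (French convention) with column heights $h_1\ge\dots\ge h_m\ge0$ such that each box in column $i$, row $j$ ($1\le j\le h_i$) satisfies $i/m+j/n\le 1$, i.e. diagrams in the $m\times n$ rectangle (width $m$, height $n$) below the diagonal; $G_m(\Delta)\in Y_{m,n}$. *)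

theory Defs
  imports Complex_Main
begin

definition Gamma :: "nat \<Rightarrow> nat \<Rightarrow> nat set" where
  "Gamma m n = {a * m + b * n | a b. True}"

definition semimodule :: "nat \<Rightarrow> nat \<Rightarrow> nat set \<Rightarrow> bool" where
  "semimodule m n D \<longleftrightarrow> (\<forall>x\<in>D. \<forall>g\<in>Gamma m n. x + g \<in> D)"

definition zero_normalized :: "nat set \<Rightarrow> bool" where
  "zero_normalized D \<longleftrightarrow> D \<noteq> {} \<and> (LEAST x. x \<in> D) = 0"

text \<open>m-generators: a in D with a - m not in D (a - m is negative when a < m).\<close>
definition m_generators :: "nat \<Rightarrow> nat set \<Rightarrow> nat set" where
  "m_generators m D = {a \<in> D. a < m \<or> a - m \<notin> D}"

definition g_fun :: "nat \<Rightarrow> nat set \<Rightarrow> nat \<Rightarrow> nat" where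
  "g_fun n D x = card ({x..<x+n} - D)"

text \<open>Young diagrams with m columns are represented by the list of their column heights
  [h_1, ..., h_m].  G_m(D) is the list g_m(a_1), ..., g_m(a_m) with a_1 < ... < a_m
  the m-generators.\<close>
definition G_m :: "nat \<Rightarrow> nat \<Rightarrow> nat set \<Rightarrow> nat list" where
  "G_m m n D = map (g_fun n D) (sorted_list_of_set (m_generators m D))"

text \<open>Y_{m,n}: column heights h_1 \<ge> ... \<ge> h_m \<ge> 0 such that each box (column i, row j,
  1 \<le> j \<le> h_i) satisfies i/m + j/n \<le> 1.  (Column i is list index i-1.)\<close>
definition Y :: "nat \<Rightarrow> nat \<Rightarrow> nat list set" where
  "Y m n = {h. length h = m \<and> sorted_wrt (\<ge>) h \<and>
     (\<forall>i<m. \<forall>j. 1 \<le> j \<and> j \<le> h ! i \<longrightarrow>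
        real (i + 1) / real m + real j / real n \<le> 1)}"

end

theory Submission
  imports Defs "HOL-Library.Product_Lexorder"
begin

text \<open>Write the elements of a semimodule \<open>D\<close> as \<open>q * n + r\<close> with \<open>r < n\<close>. Then \<open>D\<close> is
  determined by its levels \<open>u r = min {q. q * n + r \<in> D}\<close>, and closure under adding \<open>m = k n \<plusminus> 1\<close>
  becomes a Lipschitz-type condition on \<open>u\<close> ("admissibility"); conversely every admissible
  \<open>u\<close> is the level function of a semimodule. In these coordinates the \<open>m\<close>-generators are the
  cells lying between \<open>u\<close> and a shifted copy of \<open>u\<close>, and \<open>g_m(a)\<close> counts the corners
  \<open>(u r, r)\<close> lexicographically above the cell of \<open>a\<close>.

  Injectivity: the number of columns of \<open>G_m(D)\<close> of height at least \<open>s\<close> is the number of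
  generator cells with at least \<open>s\<close> corners above them. These counts determine \<open>u\<close>, by induction
  on \<open>n\<close>: removing the last maximal corner of \<open>u\<close> shifts them by one, and the count for
  \<open>s = 1\<close> locates the removed corner.

  \<open>G_m(D) \<in> Y_{m,n}\<close>: if \<open>a\<close> is the \<open>i\<close>-th generator, then \<open>i\<close> is at most the number of
  \<open>t \<in> (a, a + m]\<close> with \<open>t - m \<in> D\<close>, and a double count of these windows against windows of
  length \<open>n\<close> gives \<open>i n \<le> m (n - g_m(a))\<close>.

  Surjectivity follows by counting: an explicit level function, read off from the column
  counts of a diagram, injects \<open>Y_{m,n}\<close> into the set of semimodules.\<close>

text \<open>Cells \<open>(q, r)\<close> are compared lexicographically. The simp rules of this order make the
  automation below loop, so it is unfolded explicitly (\<open>less_prod_def'\<close>) where needed.\<close>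
declare less_prod_simp [simp del] less_eq_prod_simp [simp del]

section \<open>Level functions and their generator cells\<close>

text \<open>The flag \<open>e\<close> selects the case \<open>m = k n + 1\<close> (\<open>True\<close>) or \<open>m = k n - 1\<close> (\<open>False\<close>).\<close>
definition admissible :: "bool \<Rightarrow> nat \<Rightarrow> nat \<Rightarrow> (nat \<Rightarrow> nat) \<Rightarrow> bool" where
  "admissible e k n u \<longleftrightarrow> u 0 = 0 \<and>
     (if e then \<forall>r. 0 < r \<and> r < n \<longrightarrow> u r \<le> u (r - 1) + k
      else (\<forall>r. Suc r < n \<longrightarrow> u r \<le> u (Suc r) + k) \<and> u (n - 1) \<le> k - 1)"

text \<open>A cell \<open>(q, r)\<close> with \<open>u r < q \<le> gen_bound e k n u r\<close> is the cell of the
  \<open>m\<close>-generator \<open>(q - 1) * n + r\<close>.\<close>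
definition gen_bound :: "bool \<Rightarrow> nat \<Rightarrow> nat \<Rightarrow> (nat \<Rightarrow> nat) \<Rightarrow> nat \<Rightarrow> nat" where
  "gen_bound e k n u r =
     (if e then (if r = 0 then u (n - 1) + k + 1 else u (r - 1) + k)
      else (if Suc r = n then k - 1 else u (Suc r) + k))"

definition gen_cells :: "bool \<Rightarrow> nat \<Rightarrow> nat \<Rightarrow> (nat \<Rightarrow> nat) \<Rightarrow> (nat \<times> nat) set" where
  "gen_cells e k n u = {x. snd x < n \<and> u (snd x) < fst x \<and> fst x \<le> gen_bound e k n u (snd x)}"

definition corners :: "nat \<Rightarrow> (nat \<Rightarrow> nat) \<Rightarrow> (nat \<times> nat) set" where
  "corners n u = (\<lambda>r. (u r, r)) ` {..<n}"

definition corners_above :: "nat \<Rightarrow> (nat \<Rightarrow> nat) \<Rightarrow> nat \<times> nat \<Rightarrow> nat" where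
  "corners_above n u x = card {y \<in> corners n u. x < y}"

definition gen_count_ge :: "bool \<Rightarrow> nat \<Rightarrow> nat \<Rightarrow> (nat \<Rightarrow> nat) \<Rightarrow> nat \<Rightarrow> nat" where
  "gen_count_ge e k n u s = card {x \<in> gen_cells e k n u. s \<le> corners_above n u x}"

definition gen_count_below :: "bool \<Rightarrow> nat \<Rightarrow> nat \<Rightarrow> (nat \<Rightarrow> nat) \<Rightarrow> nat \<times> nat \<Rightarrow> nat" where
  "gen_count_below e k n u c = card {x \<in> gen_cells e k n u. x < c}"

text \<open>The conditions satisfied by the last maximal corner \<open>c\<close> of an admissible level function
  on \<open>n + 1\<close> residues, relative to the remaining levels \<open>w\<close>.\<close>
definition fits_corner :: "bool \<Rightarrow> nat \<Rightarrow> nat \<Rightarrow> (nat \<Rightarrow> nat) \<Rightarrow> nat \<times> nat \<Rightarrow> bool" where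
  "fits_corner e k n w c \<longleftrightarrow> 1 \<le> snd c \<and> snd c \<le> n \<and> (\<forall>i < snd c. w i \<le> fst c)
     \<and> (\<forall>i. snd c \<le> i \<and> i < n \<longrightarrow> w i < fst c)
     \<and> (if e then fst c \<le> w (snd c - 1) + k
        else (snd c < n \<longrightarrow> fst c \<le> w (snd c) + k) \<and> (snd c = n \<longrightarrow> fst c \<le> k - 1))"

definition skip :: "nat \<Rightarrow> nat \<Rightarrow> nat" where
  "skip p r = (if r < p then r else Suc r)"

definition del_at :: "nat \<Rightarrow> (nat \<Rightarrow> nat) \<Rightarrow> nat \<Rightarrow> nat" where
  "del_at p u r = u (skip p r)"

definition lift_cell :: "nat \<Rightarrow> nat \<times> nat \<Rightarrow> nat \<times> nat" where
  "lift_cell p x = (fst x, skip p (snd x))"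

lemma admissibleD_zero: "admissible e k n u \<Longrightarrow> u 0 = 0"
  unfolding admissible_def by simp

lemma admissibleD_plus: "admissible e k n u \<Longrightarrow> e \<Longrightarrow> 0 < r \<Longrightarrow> r < n \<Longrightarrow> u r \<le> u (r - 1) + k"
  unfolding admissible_def by simp

lemma admissibleD_minus: "admissible e k n u \<Longrightarrow> \<not> e \<Longrightarrow> Suc r < n \<Longrightarrow> u r \<le> u (Suc r) + k"
  unfolding admissible_def by simp

lemma admissibleD_minus_last: "admissible e k n u \<Longrightarrow> \<not> e \<Longrightarrow> u (n - 1) \<le> k - 1"
  unfolding admissible_def by simp

lemma finite_corners: "finite (corners n u)"
  unfolding corners_def by simp

lemma finite_gen_cells: "finite (gen_cells e k n u)"
proof -
  have "gen_cells e k n u \<subseteq> {..(\<Sum>r<n. gen_bound e k n u r)} \<times> {..<n}"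
  proof
    fix x assume "x \<in> gen_cells e k n u"
    then have "snd x < n" "fst x \<le> gen_bound e k n u (snd x)" unfolding gen_cells_def by auto
    moreover have "gen_bound e k n u (snd x) \<le> (\<Sum>r<n. gen_bound e k n u r)"
      using \<open>snd x < n\<close> by (intro member_le_sum) auto
    ultimately show "x \<in> {..(\<Sum>r<n. gen_bound e k n u r)} \<times> {..<n}"
      by (cases x) auto
  qed
  then show ?thesis by (rule finite_subset) auto
qed

lemma gen_bound_cong:
  "\<forall>r<n. u r = u' r \<Longrightarrow> r < n \<Longrightarrow> gen_bound e k n u r = gen_bound e k n u' r"
  unfolding gen_bound_def by auto

lemma gen_cells_cong: "\<forall>r<n. u r = u' r \<Longrightarrow> gen_cells e k n u = gen_cells e k n u'"
  unfolding gen_cells_def using gen_bound_cong[of n u u'] by auto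

lemma gen_count_below_cong:
  "\<forall>r<n. u r = u' r \<Longrightarrow> gen_count_below e k n u c = gen_count_below e k n u' c"
  unfolding gen_count_below_def using gen_cells_cong[of n u u'] by simp

lemma fits_corner_cong: "\<forall>r<n. u r = u' r \<Longrightarrow> fits_corner e k n u c \<Longrightarrow> fits_corner e k n u' c"
  unfolding fits_corner_def by (auto split: if_splits)

lemma inj_skip: "inj (skip p)"
  unfolding inj_def skip_def by auto

lemma skip_image: "p < n \<Longrightarrow> skip p ` {..<n - 1} = {..<n} - {p}"
proof (intro equalityI subsetI)
  fix r assume "p < n" "r \<in> {..<n} - {p}"
  then have "r = skip p (if r < p then r else r - 1)" "(if r < p then r else r - 1) < n - 1"
    unfolding skip_def by auto
  then show "r \<in> skip p ` {..<n - 1}" by blast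
qed (auto simp: skip_def split: if_splits)

lemma skip_neq: "skip p r \<noteq> p"
  unfolding skip_def by auto

lemma lift_cell_less_iff: "lift_cell p x < lift_cell p y \<longleftrightarrow> x < y"
  unfolding less_prod_def' lift_cell_def skip_def by auto

lemma lift_cell_less_corner_iff: "lift_cell p x < (c, p) \<longleftrightarrow> x < (c, p)"
  unfolding less_prod_def' lift_cell_def skip_def by auto

lemma inj_lift_cell: "inj (lift_cell p)"
  using inj_skip unfolding inj_def lift_cell_def by (auto simp: prod_eq_iff)

lemma ex_last_argmax:
  fixes u :: "nat \<Rightarrow> nat"
  assumes "0 < n"
  shows "\<exists>p<n. (\<forall>r<n. u r \<le> u p) \<and> (\<forall>r. p < r \<and> r < n \<longrightarrow> u r < u p)"
proof -
  define M where "M = Max (u ` {..<n})"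
  define S where "S = {r. r < n \<and> u r = M}"
  have fin: "finite S" unfolding S_def by auto
  have "M \<in> u ` {..<n}" unfolding M_def using assms by (intro Max_in) auto
  then have "S \<noteq> {}" unfolding S_def by auto
  then have "Max S \<in> S" using fin by (rule Max_in[rotated])
  moreover have le: "\<forall>r<n. u r \<le> M" unfolding M_def by auto
  moreover have "u r < M" if "Max S < r" "r < n" for r
  proof -
    have "r \<notin> S" using that Max_ge[OF fin, of r] by auto
    then show ?thesis using that le unfolding S_def by force
  qed
  ultimately show ?thesis unfolding S_def by auto
qed

text \<open>Deleting the corner \<open>(u p, p)\<close> is the induction step of the reconstruction theorem.\<close>
locale last_max =
  fixes e :: bool and k n :: nat and u :: "nat \<Rightarrow> nat" and p :: nat
  assumes adm: "admissible e k n u" and n_ge_2: "2 \<le> n" and p_less: "p < n"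
    and max_at: "\<forall>r<n. u r \<le> u p" and last_max_at: "\<forall>r. p < r \<and> r < n \<longrightarrow> u r < u p"
begin

lemma p_pos: "0 < p"
proof (rule ccontr)
  assume "\<not> 0 < p"
  with last_max_at n_ge_2 have "u 1 < u 0" by auto
  with admissibleD_zero[OF adm] show False by simp
qed

lemma admissible_del_at_plus:
  assumes e shows "admissible e k (n - 1) (del_at p u)"
proof -
  have "del_at p u r \<le> del_at p u (r - 1) + k" if "0 < r" "r < n - 1" for r
  proof -
    consider "r < p" | "r = p" | "p < r" by arith
    then show ?thesis
    proof cases
      case 1 then show ?thesis
        using admissibleD_plus[OF adm \<open>e\<close>, of r] that unfolding del_at_def skip_def by auto
    next
      case 2
      have "u (Suc p) \<le> u p" using max_at that 2 by auto
      also have "u p \<le> u (p - 1) + k" using admissibleD_plus[OF adm \<open>e\<close>, of p] p_pos p_less by auto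
      finally show ?thesis using 2 p_pos unfolding del_at_def skip_def by auto
    next
      case 3 then show ?thesis
        using admissibleD_plus[OF adm \<open>e\<close>, of "Suc r"] that unfolding del_at_def skip_def by auto
    qed
  qed
  then show ?thesis
    using assms p_pos admissibleD_zero[OF adm] unfolding admissible_def del_at_def skip_def by auto
qed

lemma admissible_del_at_minus:
  assumes "\<not> e" shows "admissible e k (n - 1) (del_at p u)"
proof -
  have "del_at p u r \<le> del_at p u (Suc r) + k" if "Suc r < n - 1" for r
  proof -
    consider "Suc r < p" | "Suc r = p" | "p \<le> r" by arith
    then show ?thesis
    proof cases
      case 1 then show ?thesis
        using admissibleD_minus[OF adm assms, of r] that unfolding del_at_def skip_def by auto
    next
      case 2
      have "u r \<le> u p" using max_at that by auto
      also have "u p \<le> u (Suc p) + k" using admissibleD_minus[OF adm assms, of p] that 2 by auto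
      finally show ?thesis using 2 unfolding del_at_def skip_def by auto
    next
      case 3 then show ?thesis
        using admissibleD_minus[OF adm assms, of "Suc r"] that unfolding del_at_def skip_def by auto
    qed
  qed
  moreover have "del_at p u (n - 2) \<le> k - 1"
  proof (cases "p = n - 1")
    case True
    then have "u (n - 2) \<le> u p" "u p \<le> k - 1"
      using max_at admissibleD_minus_last[OF adm assms] n_ge_2 by auto
    then show ?thesis using True n_ge_2 unfolding del_at_def skip_def by auto
  next
    case False
    then have "skip p (n - 2) = n - 1" using p_less n_ge_2 unfolding skip_def by auto
    then show ?thesis using admissibleD_minus_last[OF adm assms] unfolding del_at_def by simp
  qed
  ultimately show ?thesis
    using assms p_pos admissibleD_zero[OF adm] unfolding admissible_def del_at_def skip_def
    by (auto simp: numeral_2_eq_2)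
qed

lemma admissible_del_at: "admissible e k (n - 1) (del_at p u)"
  using admissible_del_at_plus admissible_del_at_minus by blast

lemma fits_corner_removed: "fits_corner e k (n - 1) (del_at p u) (u p, p)"
  using p_pos p_less max_at last_max_at admissibleD_plus[OF adm, of p]
    admissibleD_minus[OF adm, of p] admissibleD_minus_last[OF adm]
  unfolding fits_corner_def del_at_def skip_def by auto

lemma gen_bound_del_at_plus:
  assumes e and r: "r < n - 1" and below: "(q, r) < (u p, p)"
  shows "q \<le> gen_bound e k (n - 1) (del_at p u) r \<longleftrightarrow> q \<le> gen_bound e k n u (skip p r)"
proof -
  have step: "u p \<le> u (p - 1) + k" using admissibleD_plus[OF adm \<open>e\<close>, of p] p_pos p_less by auto
  consider "r = 0" "p = n - 1" | "r = 0" "p < n - 1" | "0 < r" "r < p" | "r = p" | "p < r"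
    using p_less by linarith
  then show ?thesis
  proof cases
    case 1
    then have "q \<le> u p" using below n_ge_2 unfolding less_prod_def' by auto
    then show ?thesis using 1 step p_pos \<open>e\<close> n_ge_2
      unfolding gen_bound_def del_at_def skip_def by auto
  next
    case 2
    then have "Suc (n - 2) = n - 1" using n_ge_2 by arith
    then show ?thesis using 2 \<open>e\<close> p_pos
      unfolding gen_bound_def del_at_def skip_def by (auto simp: numeral_2_eq_2)
  next
    case 4
    then have "q < u p" using below unfolding less_prod_def' by auto
    then show ?thesis using 4 step p_pos \<open>e\<close> unfolding gen_bound_def del_at_def skip_def by auto
  qed (use \<open>e\<close> in \<open>auto simp: gen_bound_def del_at_def skip_def\<close>)
qed

lemma gen_bound_del_at_minus:
  assumes "\<not> e" and r: "r < n - 1" and below: "(q, r) < (u p, p)"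
  shows "q \<le> gen_bound e k (n - 1) (del_at p u) r \<longleftrightarrow> q \<le> gen_bound e k n u (skip p r)"
proof -
  consider "Suc r < p" | "Suc r = p" "p = n - 1" | "Suc r = p" "p < n - 1" | "p \<le> r"
    using p_less by linarith
  then show ?thesis
  proof cases
    case 2
    then have "q \<le> u p" "u p \<le> k - 1"
      using below admissibleD_minus_last[OF adm \<open>\<not> e\<close>] unfolding less_prod_def' by auto
    then show ?thesis using 2 \<open>\<not> e\<close> unfolding gen_bound_def del_at_def skip_def by auto
  next
    case 3
    then have "q \<le> u p" "u p \<le> u (Suc p) + k"
      using below admissibleD_minus[OF adm \<open>\<not> e\<close>, of p] unfolding less_prod_def' by auto
    then show ?thesis using 3 \<open>\<not> e\<close> unfolding gen_bound_def del_at_def skip_def by auto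
  qed (use \<open>\<not> e\<close> p_less n_ge_2 in \<open>auto simp: gen_bound_def del_at_def skip_def\<close>)
qed

lemma gen_bound_del_at:
  "r < n - 1 \<Longrightarrow> (q, r) < (u p, p) \<Longrightarrow>
    q \<le> gen_bound e k (n - 1) (del_at p u) r \<longleftrightarrow> q \<le> gen_bound e k n u (skip p r)"
  using gen_bound_del_at_plus gen_bound_del_at_minus by blast

lemma lift_cell_mem_gen_cells_iff:
  assumes "r < n - 1" and "(q, r) < (u p, p)"
  shows "lift_cell p (q, r) \<in> gen_cells e k n u \<longleftrightarrow> (q, r) \<in> gen_cells e k (n - 1) (del_at p u)"
proof -
  have "skip p r < n" using assms(1) unfolding skip_def by auto
  then show ?thesis using assms gen_bound_del_at[OF assms]
    unfolding gen_cells_def lift_cell_def del_at_def by auto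
qed

lemma gen_cells_below_max:
  "{x \<in> gen_cells e k n u. x < (u p, p)} =
    lift_cell p ` {x \<in> gen_cells e k (n - 1) (del_at p u). x < (u p, p)}"
proof (intro equalityI subsetI)
  fix x assume "x \<in> {x \<in> gen_cells e k n u. x < (u p, p)}"
  then obtain q r where x: "x = (q, r)" "x \<in> gen_cells e k n u" "x < (u p, p)"
    by (cases x) auto
  then have "r \<in> {..<n} - {p}" unfolding gen_cells_def less_prod_def' by auto
  then obtain r' where r': "r' < n - 1" "r = skip p r'" using skip_image[OF p_less] by auto
  show "x \<in> lift_cell p ` {x \<in> gen_cells e k (n - 1) (del_at p u). x < (u p, p)}"
  proof (rule image_eqI)
    show "x = lift_cell p (q, r')" using x r' unfolding lift_cell_def by simp
    then show "(q, r') \<in> {x \<in> gen_cells e k (n - 1) (del_at p u). x < (u p, p)}"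
      using x r' lift_cell_mem_gen_cells_iff lift_cell_less_corner_iff by auto
  qed
next
  fix x assume "x \<in> lift_cell p ` {x \<in> gen_cells e k (n - 1) (del_at p u). x < (u p, p)}"
  then obtain q r where "(q, r) \<in> gen_cells e k (n - 1) (del_at p u)" "(q, r) < (u p, p)"
    "x = lift_cell p (q, r)" by auto
  moreover from this have "r < n - 1" unfolding gen_cells_def by simp
  ultimately show "x \<in> {x \<in> gen_cells e k n u. x < (u p, p)}"
    using lift_cell_mem_gen_cells_iff lift_cell_less_corner_iff by auto
qed

lemma corners_del_at: "corners n u = insert (u p, p) (lift_cell p ` corners (n - 1) (del_at p u))"
proof -
  have "{..<n} = insert p (skip p ` {..<n - 1})" using skip_image p_less by auto
  then show ?thesis unfolding corners_def lift_cell_def del_at_def by (simp add: image_image)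
qed

lemma corner_le_max: "y \<in> corners n u \<Longrightarrow> y \<le> (u p, p)"
proof -
  assume "y \<in> corners n u"
  then obtain r where "r < n" "y = (u r, r)" unfolding corners_def by auto
  moreover have "u r \<le> u p" if "r < n" "r \<le> p" for r using that max_at by simp
  moreover have "u r < u p" if "r < n" "p < r" for r using that last_max_at by simp
  ultimately show ?thesis unfolding less_eq_prod_def by (cases "r \<le> p") auto
qed

lemma corner_del_at_less_max: "y \<in> corners (n - 1) (del_at p u) \<Longrightarrow> y < (u p, p)"
proof -
  assume "y \<in> corners (n - 1) (del_at p u)"
  then have "lift_cell p y \<le> (u p, p)" "lift_cell p y \<noteq> (u p, p)"
    using corner_le_max skip_neq unfolding corners_del_at lift_cell_def by auto
  then have "lift_cell p y < (u p, p)" by (rule le_neq_trans)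
  then show ?thesis by (simp only: lift_cell_less_corner_iff)
qed

lemma corners_above_eq_0: "\<not> x < (u p, p) \<Longrightarrow> corners_above n u x = 0"
proof -
  assume "\<not> x < (u p, p)"
  then have none: "{y \<in> corners n u. x < y} = {}" using corner_le_max less_le_trans by blast
  show ?thesis unfolding corners_above_def none by simp
qed

lemma corners_above_del_at_eq_0: "\<not> x < (u p, p) \<Longrightarrow> corners_above (n - 1) (del_at p u) x = 0"
proof -
  assume "\<not> x < (u p, p)"
  then have none: "{y \<in> corners (n - 1) (del_at p u). x < y} = {}"
    using corner_del_at_less_max less_trans by blast
  show ?thesis unfolding corners_above_def none by simp
qed

lemma corners_above_lift:
  assumes "lift_cell p x < (u p, p)"
  shows "corners_above n u (lift_cell p x) = Suc (corners_above (n - 1) (del_at p u) x)"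
proof -
  let ?A = "{y \<in> corners (n - 1) (del_at p u). x < y}"
  have "{y \<in> corners n u. lift_cell p x < y} = insert (u p, p) (lift_cell p ` ?A)"
    using assms unfolding corners_del_at by (auto simp: lift_cell_less_iff)
  moreover have "(u p, p) \<notin> lift_cell p ` ?A"
    unfolding lift_cell_def image_iff by (metis snd_conv skip_neq)
  ultimately show ?thesis unfolding corners_above_def using finite_corners
    by (simp add: card_image inj_on_subset[OF inj_lift_cell])
qed

lemma gen_count_ge_del_at:
  assumes "1 \<le> s"
  shows "gen_count_ge e k (n - 1) (del_at p u) s = gen_count_ge e k n u (Suc s)"
proof -
  let ?c = "(u p, p)" and ?w = "del_at p u"
  have "x < ?c" if "Suc s \<le> corners_above n u x" for x
    using that corners_above_eq_0 by fastforce
  then have "{x \<in> gen_cells e k n u. Suc s \<le> corners_above n u x}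
      = {x \<in> {x \<in> gen_cells e k n u. x < ?c}. Suc s \<le> corners_above n u x}"
    by blast
  also have "\<dots> = lift_cell p ` {x \<in> {x \<in> gen_cells e k (n - 1) ?w. x < ?c}.
                      Suc s \<le> corners_above n u (lift_cell p x)}"
    unfolding gen_cells_below_max by auto
  also have "{x \<in> {x \<in> gen_cells e k (n - 1) ?w. x < ?c}. Suc s \<le> corners_above n u (lift_cell p x)}
      = {x \<in> gen_cells e k (n - 1) ?w. s \<le> corners_above (n - 1) ?w x}"
  proof -
    have "Suc s \<le> corners_above n u (lift_cell p x) \<longleftrightarrow> s \<le> corners_above (n - 1) ?w x"
      if "x < ?c" for x
      using that corners_above_lift[of x] lift_cell_less_corner_iff[of p x] by simp
    moreover have "\<not> s \<le> corners_above (n - 1) ?w x" if "\<not> x < ?c" for x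
      using assms corners_above_del_at_eq_0[OF that] by simp
    ultimately show ?thesis by blast
  qed
  finally show ?thesis unfolding gen_count_ge_def
    by (simp add: card_image inj_on_subset[OF inj_lift_cell])
qed

lemma gen_count_ge_1: "gen_count_ge e k n u 1 = gen_count_below e k (n - 1) (del_at p u) (u p, p)"
proof -
  have "0 < corners_above n u x" if "x < (u p, p)" for x
  proof -
    have "(u p, p) \<in> {y \<in> corners n u. x < y}" using that p_less unfolding corners_def by auto
    then show ?thesis unfolding corners_above_def using finite_corners by (auto simp: card_gt_0_iff)
  qed
  then have "{x \<in> gen_cells e k n u. 1 \<le> corners_above n u x} = {x \<in> gen_cells e k n u. x < (u p, p)}"
    using corners_above_eq_0 by (force simp: Suc_le_eq)
  then show ?thesis unfolding gen_count_ge_def gen_count_below_def gen_cells_below_max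
    by (simp add: card_image inj_on_subset[OF inj_lift_cell])
qed

end

lemma ex_gen_cell_between:
  assumes adm: "admissible e k n w" and c1: "fits_corner e k n w (v1, r1)"
    and c2: "fits_corner e k n w (v2, r2)" and less: "(v1, r1) < (v2, r2)"
  shows "\<exists>x \<in> gen_cells e k n w. (v1, r1) \<le> x \<and> x < (v2, r2)"
proof (cases e)
  case True
  have top1: "v1 \<le> w (r1 - 1) + k" using c1 True unfolding fits_corner_def by auto
  show ?thesis
  proof (cases "r1 < n")
    case True
    then have "(v1, r1) \<in> gen_cells e k n w"
      using c1 top1 \<open>e\<close> unfolding fits_corner_def gen_cells_def gen_bound_def by auto
    then show ?thesis using less by blast
  next
    case False
    then have "r1 = n" "v1 < v2" using c1 c2 less unfolding fits_corner_def less_prod_def' by auto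
    then have "(Suc v1, 0) \<in> gen_cells e k n w" "(Suc v1, 0) < (v2, r2)"
      using c1 c2 top1 \<open>e\<close> admissibleD_zero[OF adm]
      unfolding fits_corner_def gen_cells_def gen_bound_def less_prod_def' by auto
    moreover have "(v1, r1) \<le> (Suc v1, 0)" unfolding less_eq_prod_def by simp
    ultimately show ?thesis by blast
  qed
next
  case False
  have r2: "1 \<le> r2" "r2 \<le> n" using c2 unfolding fits_corner_def by auto
  have "w (r2 - 1) < v2"
  proof (cases "r1 \<le> r2 - 1")
    case True
    then have "w (r2 - 1) < v1" using c1 r2 unfolding fits_corner_def by auto
    then show ?thesis using less unfolding less_prod_def' by auto
  next
    case False
    then have "w (r2 - 1) \<le> v1" "v1 < v2" using c1 less unfolding fits_corner_def less_prod_def' by auto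
    then show ?thesis by simp
  qed
  then have "(v2, r2 - 1) \<in> gen_cells e k n w"
    using c2 False unfolding fits_corner_def gen_cells_def gen_bound_def by auto
  moreover have "(v1, r1) \<le> (v2, r2 - 1)" "(v2, r2 - 1) < (v2, r2)"
    using c2 less unfolding fits_corner_def less_prod_def' less_eq_prod_def by auto
  ultimately show ?thesis by blast
qed

lemma gen_count_below_strict_mono:
  assumes "admissible e k n w" "fits_corner e k n w c1" "fits_corner e k n w c2" "c1 < c2"
  shows "gen_count_below e k n w c1 < gen_count_below e k n w c2"
proof -
  obtain x where "x \<in> gen_cells e k n w" "c1 \<le> x" "x < c2"
    using ex_gen_cell_between[of e k n w "fst c1" "snd c1" "fst c2" "snd c2"] assms by auto
  then have "{x \<in> gen_cells e k n w. x < c1} \<subset> {x \<in> gen_cells e k n w. x < c2}"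
    using \<open>c1 < c2\<close> less_trans leD by blast
  then show ?thesis unfolding gen_count_below_def
    by (intro psubset_card_mono) (auto intro: finite_subset[OF _ finite_gen_cells])
qed

lemma fits_corner_eq_if_gen_count_below_eq:
  assumes "admissible e k n w" "fits_corner e k n w c1" "fits_corner e k n w c2"
    and "gen_count_below e k n w c1 = gen_count_below e k n w c2"
  shows "c1 = c2"
proof (rule ccontr)
  assume "c1 \<noteq> c2"
  then consider "c1 < c2" | "c2 < c1" by (auto simp: neq_iff)
  then show False
    using gen_count_below_strict_mono[OF assms(1)] assms(2-4) by cases fastforce+
qed

lemma eq_if_del_at_eq:
  assumes "p < n" "u p = u' p" "\<forall>r<n - 1. del_at p u r = del_at p u' r"
  shows "\<forall>r<n. u r = u' r"
proof (intro allI impI)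
  fix r assume "r < n"
  show "u r = u' r"
  proof (cases "r = p")
    case False
    with \<open>r < n\<close> obtain r' where "r' < n - 1" "r = skip p r'"
      using skip_image[OF assms(1)] by blast
    then show ?thesis using assms(3) unfolding del_at_def by simp
  qed (use assms in simp)
qed

theorem admissible_eq_if_gen_count_ge_eq:
  assumes "admissible e k n u" "admissible e k n u'"
    and "\<forall>s\<ge>1. gen_count_ge e k n u s = gen_count_ge e k n u' s"
  shows "\<forall>r<n. u r = u' r"
  using assms
proof (induction n arbitrary: u u')
  case (Suc n)
  show ?case
  proof (cases "n = 0")
    case True
    then show ?thesis using admissibleD_zero[OF Suc.prems(1)] admissibleD_zero[OF Suc.prems(2)] by auto
  next
    case False
    obtain p where p: "p < Suc n" "\<forall>r<Suc n. u r \<le> u p" "\<forall>r. p < r \<and> r < Suc n \<longrightarrow> u r < u p"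
      using ex_last_argmax[of "Suc n" u] by auto
    obtain p' where p': "p' < Suc n" "\<forall>r<Suc n. u' r \<le> u' p'"
      "\<forall>r. p' < r \<and> r < Suc n \<longrightarrow> u' r < u' p'"
      using ex_last_argmax[of "Suc n" u'] by auto
    interpret d: last_max e k "Suc n" u p
      using Suc.prems p False by unfold_locales auto
    interpret d': last_max e k "Suc n" u' p'
      using Suc.prems p' False by unfold_locales auto
    have "admissible e k n (del_at p u)" "admissible e k n (del_at p' u')"
      using d.admissible_del_at d'.admissible_del_at by simp_all
    then have del_eq: "\<forall>r<n. del_at p u r = del_at p' u' r"
      using Suc.IH Suc.prems(3) d.gen_count_ge_del_at d'.gen_count_ge_del_at by simp
    have "gen_count_below e k n (del_at p u) (u p, p) = gen_count_below e k n (del_at p u) (u' p', p')"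
      using d.gen_count_ge_1 d'.gen_count_ge_1 Suc.prems(3) gen_count_below_cong[OF del_eq] by simp
    then have "(u p, p) = (u' p', p')"
      using d.admissible_del_at d.fits_corner_removed d'.fits_corner_removed
        fits_corner_cong[of n "del_at p' u'" "del_at p u"] del_eq
      by (intro fits_corner_eq_if_gen_count_below_eq[of e k n "del_at p u"]) auto
    then show ?thesis using eq_if_del_at_eq[of p "Suc n" u u'] p(1) del_eq by auto
  qed
qed simp

section \<open>Semimodules and their level functions\<close>

definition m_of :: "bool \<Rightarrow> nat \<Rightarrow> nat \<Rightarrow> nat" where
  "m_of e k n = (if e then k * n + 1 else k * n - 1)"

definition level :: "nat \<Rightarrow> nat set \<Rightarrow> nat \<Rightarrow> nat" where
  "level n D r = (LEAST q. q * n + r \<in> D)"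

lemma Gamma_mem_iff: "x \<in> Gamma m n \<longleftrightarrow> (\<exists>a b. x = a * m + b * n)"
  unfolding Gamma_def by auto

lemma mem_Gamma_plus:
  assumes "r * k \<le> q"
  shows "q * n + r \<in> Gamma (k * n + 1) n"
proof -
  obtain t where "q = r * k + t" using assms le_Suc_ex by blast
  then have "q * n + r = r * (k * n + 1) + t * n" by (simp add: algebra_simps)
  then show ?thesis unfolding Gamma_mem_iff by blast
qed

lemma mem_Gamma_minus:
  assumes "r < n" "1 \<le> k" "(n - r) * k \<le> q + 1"
  shows "q * n + r \<in> Gamma (k * n - 1) n"
proof -
  obtain t where t: "q + 1 = (n - r) * k + t" using assms(3) le_Suc_ex by blast
  have "q * n + r + (n - r) = (q + 1) * n" using assms(1) by simp
  also have "\<dots> = ((n - r) * k + t) * n" by (simp only: t)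
  also have "\<dots> = (n - r) * (k * n) + t * n" by (simp add: algebra_simps)
  finally have "q * n + r + (n - r) = (n - r) * (k * n) + t * n" .
  moreover have "(n - r) * (k * n - 1) + (n - r) = (n - r) * (k * n)"
  proof -
    have "k * n - 1 + 1 = k * n" using assms(1,2) by simp
    then show ?thesis by (metis add_mult_distrib2 nat_mult_1_right)
  qed
  ultimately have "q * n + r = (n - r) * (k * n - 1) + t * n" by linarith
  then show ?thesis unfolding Gamma_mem_iff by blast
qed

lemma large_mem_Gamma:
  assumes "1 \<le> n" "1 \<le> k" "n * n * k \<le> x"
  shows "x \<in> Gamma (m_of e k n) n"
proof -
  define q r where "q = x div n" and "r = x mod n"
  have x: "x = q * n + r" and r: "r < n" unfolding q_def r_def using assms(1) by simp_all
  have "n * k * n div n \<le> x div n" using assms(3) by (intro div_le_mono) (simp add: ac_simps)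
  then have q: "n * k \<le> q" unfolding q_def using assms(1) by simp
  show ?thesis
  proof (cases e)
    case True
    have "r * k \<le> q" using q r by (meson le_trans less_imp_le_nat mult_le_mono1)
    then show ?thesis using True mem_Gamma_plus unfolding x m_of_def by simp
  next
    case False
    have "(n - r) * k \<le> q + 1" using q by (meson diff_le_self le_trans mult_le_mono1 trans_le_add1)
    then show ?thesis using False mem_Gamma_minus[OF r assms(2)] unfolding x m_of_def by simp
  qed
qed

locale near_multiple =
  fixes e :: bool and k n m :: nat
  assumes n_ge_1: "1 \<le> n" and k_ge_1: "1 \<le> k" and m_eq: "m = m_of e k n" and m_ge_1: "1 \<le> m"

locale zn_semimodule = near_multiple +
  fixes D :: "nat set"
  assumes semimodule_D: "semimodule m n D" and zero_normalized_D: "zero_normalized D"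
begin

abbreviation "lev \<equiv> level n D"

lemma zero_mem: "0 \<in> D"
proof -
  obtain x where "x \<in> D" using zero_normalized_D unfolding zero_normalized_def by auto
  then have "(LEAST x. x \<in> D) \<in> D" by (rule LeastI)
  then show ?thesis using zero_normalized_D unfolding zero_normalized_def by simp
qed

lemma add_mult_mem: "x \<in> D \<Longrightarrow> x + (a * m + b * n) \<in> D"
proof -
  assume "x \<in> D"
  moreover have "a * m + b * n \<in> Gamma m n" unfolding Gamma_mem_iff by blast
  ultimately show ?thesis using semimodule_D unfolding semimodule_def by blast
qed

lemma add_m_mem: "x \<in> D \<Longrightarrow> x + m \<in> D"
  using add_mult_mem[of x 1 0] by simp

lemma add_n_mem: "x \<in> D \<Longrightarrow> x + n \<in> D"
  using add_mult_mem[of x 0 1] by simp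

lemma add_mult_n_mem: "x \<in> D \<Longrightarrow> x + c * n \<in> D"
  using add_mult_mem[of x 0 c] by simp

lemma add_mult_m_mem: "x \<in> D \<Longrightarrow> x + c * m \<in> D"
  using add_mult_mem[of x c 0] by simp

lemma large_mem: "n * n * k \<le> x \<Longrightarrow> x \<in> D"
  using large_mem_Gamma[OF n_ge_1 k_ge_1] add_mult_mem[OF zero_mem] m_eq
  unfolding Gamma_mem_iff by fastforce

lemma level_mem: "r < n \<Longrightarrow> lev r * n + r \<in> D"
  unfolding level_def by (rule LeastI[of _ "n * k"]) (rule large_mem, simp)

lemma mem_iff_level_le: "r < n \<Longrightarrow> q * n + r \<in> D \<longleftrightarrow> lev r \<le> q"
proof
  assume "r < n" "lev r \<le> q"
  then have "q * n + r = (lev r * n + r) + (q - lev r) * n" by (simp add: algebra_simps)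
  then show "q * n + r \<in> D" using add_mult_n_mem[OF level_mem[OF \<open>r < n\<close>]] by metis
qed (auto simp: level_def intro: Least_le)

lemma mem_iff_level: "x \<in> D \<longleftrightarrow> lev (x mod n) \<le> x div n"
  using mem_iff_level_le[of "x mod n" "x div n"] n_ge_1 by simp

lemma level_zero: "lev 0 = 0"
  using mem_iff_level_le[of 0 0] zero_mem n_ge_1 by simp

lemma admissible_level: "admissible e k n lev"
proof (cases e)
  case True
  have "lev r \<le> lev (r - 1) + k" if "0 < r" "r < n" for r
  proof -
    have "lev (r - 1) * n + (r - 1) + m = (lev (r - 1) + k) * n + r"
      using that True m_eq unfolding m_of_def by (simp add: algebra_simps)
    then show ?thesis
      using add_m_mem[OF level_mem[of "r - 1"]] mem_iff_level_le[OF that(2)] that by simp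
  qed
  then show ?thesis using level_zero True unfolding admissible_def by auto
next
  case False
  have m: "m + 1 = k * n" using False m_eq n_ge_1 k_ge_1 unfolding m_of_def by simp
  have "lev r \<le> lev (Suc r) + k" if "Suc r < n" for r
  proof -
    have "lev (Suc r) * n + Suc r + m = (lev (Suc r) + k) * n + r"
      using m by (simp add: algebra_simps)
    then have "(lev (Suc r) + k) * n + r \<in> D"
      using add_m_mem[OF level_mem[of "Suc r"]] that by metis
    then show ?thesis using mem_iff_level_le[of r] that by simp
  qed
  moreover have "lev (n - 1) \<le> k - 1"
  proof -
    have "(k - 1) * n + (n - 1) = m" using m n_ge_1 k_ge_1 by (simp add: algebra_simps diff_mult_distrib)
    then show ?thesis using add_m_mem[OF zero_mem] mem_iff_level_le[of "n - 1" "k - 1"] n_ge_1 by simp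
  qed
  ultimately show ?thesis using level_zero False unfolding admissible_def by auto
qed

end

section \<open>Generators and the map \<open>G_m\<close>\<close>

text \<open>The first coordinate is shifted by one, so that \<open>a \<in> D\<close> iff its cell lies strictly above
  the corner of its column.\<close>
definition cell :: "nat \<Rightarrow> nat \<Rightarrow> nat \<times> nat" where
  "cell n a = (a div n + 1, a mod n)"

definition window_elem :: "nat \<Rightarrow> nat \<Rightarrow> nat \<Rightarrow> nat" where
  "window_elem n a r = (if a mod n \<le> r then a div n else Suc (a div n)) * n + r"

lemma inj_cell: "inj (cell n)"
proof (rule injI)
  fix a b assume "cell n a = cell n b"
  then have "a div n = b div n" "a mod n = b mod n" unfolding cell_def by auto
  then show "a = b" by (metis div_mult_mod_eq)
qed

lemma window_elem_mod: "r < n \<Longrightarrow> window_elem n a r mod n = r"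
  unfolding window_elem_def by simp

lemma bij_betw_window_elem:
  assumes "0 < n"
  shows "bij_betw (window_elem n a) {..<n} {a..<a + n}"
proof -
  have inj: "inj_on (window_elem n a) {..<n}"
    by (rule inj_onI) (metis lessThan_iff window_elem_mod)
  define q s where "q = a div n" and "s = a mod n"
  then have "a = q * n + s" "s < n" using assms by simp_all
  then have "window_elem n a ` {..<n} \<subseteq> {a..<a + n}"
    unfolding window_elem_def q_def[symmetric] s_def[symmetric] by auto
  then have "window_elem n a ` {..<n} = {a..<a + n}"
    by (intro card_subset_eq) (auto simp: card_image[OF inj])
  with inj show ?thesis unfolding bij_betw_def by simp
qed

context zn_semimodule
begin

lemma m_generator_cond_iff_plus:
  assumes e and r: "r < n"
  shows "(q * n + r < m \<or> q * n + r - m \<notin> D) \<longleftrightarrow> q + 1 \<le> gen_bound e k n lev r"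
proof -
  have m: "m = k * n + 1" using assms m_eq unfolding m_of_def by simp
  show ?thesis
  proof (cases "r = 0")
    case False
    show ?thesis
    proof (cases "k \<le> q")
      case True
      then obtain t where t: "q = k + t" using le_Suc_ex by blast
      then have "\<not> q * n + r < m" "q * n + r - m = t * n + (r - 1)"
        using False m by (simp_all add: algebra_simps)
      then show ?thesis using mem_iff_level_le[of "r - 1" t] r False t \<open>e\<close>
        unfolding gen_bound_def by auto
    next
      case False
      then have "(q + 1) * n \<le> k * n" by (intro mult_le_mono1) simp
      then show ?thesis using False \<open>r \<noteq> 0\<close> \<open>e\<close> m r unfolding gen_bound_def by auto
    qed
  next
    case True
    show ?thesis
    proof (cases "k + 1 \<le> q")
      case True
      then obtain t where t: "q = k + 1 + t" using le_Suc_ex by blast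
      then have "\<not> q * n + r < m" "q * n + r - m = t * n + (n - 1)"
        using \<open>r = 0\<close> m n_ge_1 by (simp_all add: algebra_simps)
      then show ?thesis using mem_iff_level_le[of "n - 1" t] n_ge_1 \<open>r = 0\<close> t \<open>e\<close>
        unfolding gen_bound_def by auto
    next
      case False
      then have "q * n \<le> k * n" by (intro mult_le_mono1) simp
      then have "q * n + r < m" using \<open>r = 0\<close> m by linarith
      then show ?thesis using False \<open>r = 0\<close> \<open>e\<close> unfolding gen_bound_def by auto
    qed
  qed
qed

lemma m_generator_cond_iff_minus:
  assumes "\<not> e" and r: "r < n"
  shows "(q * n + r < m \<or> q * n + r - m \<notin> D) \<longleftrightarrow> q + 1 \<le> gen_bound e k n lev r"
proof -
  have m: "m + 1 = k * n" using assms m_eq n_ge_1 k_ge_1 unfolding m_of_def by simp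
  show ?thesis
  proof (cases "Suc r < n")
    case True
    show ?thesis
    proof (cases "k \<le> q")
      case True
      then obtain t where t: "q = k + t" using le_Suc_ex by blast
      then have "\<not> q * n + r < m" "q * n + r - m = t * n + Suc r"
        using m by (simp_all add: algebra_simps)
      then show ?thesis using mem_iff_level_le[of "Suc r" t] \<open>Suc r < n\<close> t \<open>\<not> e\<close>
        unfolding gen_bound_def by auto
    next
      case False
      then have "(q + 1) * n \<le> k * n" by (intro mult_le_mono1) simp
      then show ?thesis using False \<open>Suc r < n\<close> \<open>\<not> e\<close> m unfolding gen_bound_def by auto
    qed
  next
    case False
    then have r_last: "Suc r = n" using r by simp
    show ?thesis
    proof (cases "k \<le> q + 1")
      case True
      then obtain t where "q + 1 = k + t" using le_Suc_ex by blast
      then have "(q + 1) * n = k * n + t * n" by (simp add: algebra_simps)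
      then have "\<not> q * n + r < m" "q * n + r - m = t * n + 0" using m r_last by (simp_all add: algebra_simps)
      moreover have "t * n + 0 \<in> D" using mem_iff_level_le[of 0 t] n_ge_1 level_zero by simp
      ultimately show ?thesis using True r_last \<open>\<not> e\<close> k_ge_1 unfolding gen_bound_def by auto
    next
      case False
      then have "(q + 2) * n \<le> k * n" by (intro mult_le_mono1) simp
      then show ?thesis using False r_last \<open>\<not> e\<close> m unfolding gen_bound_def by auto
    qed
  qed
qed

lemma m_generator_iff_cell: "a \<in> m_generators m D \<longleftrightarrow> cell n a \<in> gen_cells e k n lev"
proof -
  have r: "a mod n < n" using n_ge_1 by simp
  have "(a div n * n + a mod n < m \<or> a div n * n + a mod n - m \<notin> D)
      \<longleftrightarrow> a div n + 1 \<le> gen_bound e k n lev (a mod n)"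
    using m_generator_cond_iff_plus[OF _ r, of "a div n"] m_generator_cond_iff_minus[OF _ r, of "a div n"]
    by (cases e) simp_all
  then have "(a < m \<or> a - m \<notin> D) \<longleftrightarrow> a div n + 1 \<le> gen_bound e k n lev (a mod n)"
    by simp
  moreover have "a \<in> D \<longleftrightarrow> lev (a mod n) < a div n + 1" using mem_iff_level[of a] by linarith
  ultimately show ?thesis unfolding m_generators_def gen_cells_def cell_def using r by auto
qed

lemma cell_image_m_generators: "cell n ` m_generators m D = gen_cells e k n lev"
proof (intro equalityI subsetI)
  fix x assume x: "x \<in> gen_cells e k n lev"
  obtain q r where "x = (q, r)" by (cases x)
  with x have "r < n" "0 < q" unfolding gen_cells_def by auto
  then have "x = cell n ((q - 1) * n + r)" using \<open>x = (q, r)\<close> unfolding cell_def by simp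
  with x show "x \<in> cell n ` m_generators m D" using m_generator_iff_cell by blast
qed (use m_generator_iff_cell in blast)

lemma finite_m_generators: "finite (m_generators m D)"
proof (rule finite_imageD)
  show "finite (cell n ` m_generators m D)" unfolding cell_image_m_generators by (rule finite_gen_cells)
  show "inj_on (cell n) (m_generators m D)" using inj_cell by (rule inj_on_subset) simp
qed

lemma window_elem_not_mem_iff:
  assumes "a \<in> D" "r < n"
  shows "window_elem n a r \<notin> D \<longleftrightarrow> cell n a < (lev r, r)"
proof -
  define q s where "q = a div n" and "s = a mod n"
  have s: "lev s \<le> q" using assms(1) mem_iff_level unfolding q_def s_def by simp
  have cell: "cell n a < (lev r, r) \<longleftrightarrow> q + 1 < lev r \<or> q + 1 = lev r \<and> s < r"
    unfolding cell_def less_prod_def' q_def s_def by simp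
  consider "r = s" | "s < r" | "r < s" by arith
  then show ?thesis
  proof cases
    case 1
    then have "window_elem n a r = a" unfolding window_elem_def s_def by simp
    then show ?thesis using 1 assms(1) s cell by simp
  next
    case 2
    then show ?thesis using mem_iff_level_le[OF assms(2), of q] cell
      unfolding window_elem_def q_def[symmetric] s_def[symmetric] by auto
  next
    case 3
    then show ?thesis using mem_iff_level_le[OF assms(2), of "Suc q"] cell
      unfolding window_elem_def q_def[symmetric] s_def[symmetric] by auto
  qed
qed

lemma g_fun_eq_corners_above:
  assumes "a \<in> D"
  shows "g_fun n D a = corners_above n lev (cell n a)"
proof -
  let ?R = "{r. r < n \<and> cell n a < (lev r, r)}"
  have inj: "inj_on (window_elem n a) {..<n}" and img: "window_elem n a ` {..<n} = {a..<a + n}"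
    using bij_betw_window_elem[of n a] n_ge_1 unfolding bij_betw_def by auto
  have "{a..<a + n} - D = window_elem n a ` {r \<in> {..<n}. window_elem n a r \<notin> D}"
    unfolding img[symmetric] by auto
  also have "{r \<in> {..<n}. window_elem n a r \<notin> D} = ?R"
    using window_elem_not_mem_iff[OF assms] by auto
  finally have "{a..<a + n} - D = window_elem n a ` ?R" .
  moreover have "inj_on (window_elem n a) ?R" using inj by (rule inj_on_subset) auto
  moreover have "{y \<in> corners n lev. cell n a < y} = (\<lambda>r. (lev r, r)) ` ?R"
    unfolding corners_def by auto
  moreover have "inj (\<lambda>r. (lev r, r))" by (rule injI) auto
  ultimately show ?thesis unfolding g_fun_def corners_above_def
    by (simp add: card_image inj_on_subset)
qed

lemma card_m_generators_g_ge:
  "card {a \<in> m_generators m D. s \<le> g_fun n D a} = gen_count_ge e k n lev s"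
proof -
  have "{x \<in> gen_cells e k n lev. s \<le> corners_above n lev x} =
      cell n ` {a \<in> m_generators m D. s \<le> g_fun n D a}"
    unfolding cell_image_m_generators[symmetric] using g_fun_eq_corners_above
    unfolding m_generators_def by auto
  then show ?thesis unfolding gen_count_ge_def by (simp add: card_image inj_on_subset[OF inj_cell])
qed

lemma length_filter_G_m:
  "length (filter (\<lambda>h. s \<le> h) (G_m m n D)) = card {a \<in> m_generators m D. s \<le> g_fun n D a}"
proof -
  let ?xs = "sorted_list_of_set (m_generators m D)"
  have "length (filter (\<lambda>h. s \<le> h) (G_m m n D)) = length (filter (\<lambda>a. s \<le> g_fun n D a) ?xs)"
    unfolding G_m_def by (simp add: filter_map comp_def)
  also have "\<dots> = card ({a. s \<le> g_fun n D a} \<inter> set ?xs)"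
    by (rule distinct_length_filter) simp
  also have "\<dots> = card {a \<in> m_generators m D. s \<le> g_fun n D a}"
    using finite_m_generators by (simp add: Collect_conj_eq Int_commute)
  finally show ?thesis .
qed

end

lemma (in near_multiple) G_m_inj:
  assumes "zn_semimodule e k n m D" "zn_semimodule e k n m D'" "G_m m n D = G_m m n D'"
  shows "D = D'"
proof -
  interpret D: zn_semimodule e k n m D by (rule assms(1))
  interpret D': zn_semimodule e k n m D' by (rule assms(2))
  have "gen_count_ge e k n (level n D) s = gen_count_ge e k n (level n D') s" for s
  proof -
    have "gen_count_ge e k n (level n D) s = length (filter (\<lambda>h. s \<le> h) (G_m m n D))"
      using D.card_m_generators_g_ge D.length_filter_G_m by simp
    also have "\<dots> = gen_count_ge e k n (level n D') s"
      using D'.card_m_generators_g_ge D'.length_filter_G_m assms(3) by simp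
    finally show ?thesis .
  qed
  then have "\<forall>r<n. level n D r = level n D' r"
    using admissible_eq_if_gen_count_ge_eq[OF D.admissible_level D'.admissible_level] by blast
  then show ?thesis
    using D.mem_iff_level D'.mem_iff_level n_ge_1 by (auto intro!: set_eqI)
qed

section \<open>The image of \<open>G_m\<close> lies in \<open>Y_{m,n}\<close>\<close>

definition window_sum :: "(nat \<Rightarrow> nat) \<Rightarrow> nat \<Rightarrow> nat \<Rightarrow> nat" where
  "window_sum f c w = (\<Sum>t\<in>{c..<c + w}. f t)"

definition shift_ind :: "nat \<Rightarrow> nat set \<Rightarrow> nat \<Rightarrow> nat" where
  "shift_ind m D t = (if m \<le> t \<and> t - m \<in> D then 1 else 0)"

lemma card_filter_eq_sum: "finite A \<Longrightarrow> card {x \<in> A. P x} = (\<Sum>x\<in>A. if P x then 1 else 0)"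
  by (simp add: sum.inter_filter[symmetric])

lemma sum_atLeastLessThan_add: "(\<Sum>t\<in>{c..<c + w}. g t) = (\<Sum>j<w. g (c + j :: nat))"
  by (simp add: sum.atLeastLessThan_shift_0[of g c] atLeast0LessThan)

lemma window_sum_eq: "window_sum f c w = (\<Sum>j<w. f (c + j))"
  unfolding window_sum_def by (rule sum_atLeastLessThan_add)

lemma window_sum_Suc_mono:
  assumes "\<And>t. f t \<le> f (t + w)"
  shows "window_sum f c w \<le> window_sum f (Suc c) w"
proof (cases w)
  case (Suc v)
  have "window_sum f c w = f c + (\<Sum>j<v. f (Suc c + j))"
    unfolding window_sum_eq Suc sum.lessThan_Suc_shift by simp
  also have "\<dots> \<le> (\<Sum>j<v. f (Suc c + j)) + f (Suc c + v)"
    using assms[of c] Suc by simp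
  also have "\<dots> = window_sum f (Suc c) w" unfolding window_sum_eq Suc by simp
  finally show ?thesis .
qed (simp add: window_sum_def)

lemma window_sum_mono:
  "(\<And>t. f t \<le> f (t + w)) \<Longrightarrow> c \<le> c' \<Longrightarrow> window_sum f c w \<le> window_sum f c' w"
  by (rule lift_Suc_mono_le[of "\<lambda>c. window_sum f c w"]) (auto intro: window_sum_Suc_mono)

lemma sum_window_sum_swap:
  "(\<Sum>t\<in>{c..<c + v}. window_sum f t w) = (\<Sum>t\<in>{c..<c + w}. window_sum f t v)"
proof -
  have "(\<Sum>t\<in>{c..<c + v}. window_sum f t w) = (\<Sum>i<v. \<Sum>j<w. f (c + i + j))"
    unfolding sum_atLeastLessThan_add window_sum_eq ..
  also have "\<dots> = (\<Sum>j<w. \<Sum>i<v. f (c + j + i))"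
    by (subst sum.swap) (simp add: ac_simps)
  also have "\<dots> = (\<Sum>t\<in>{c..<c + w}. window_sum f t v)"
    unfolding sum_atLeastLessThan_add window_sum_eq ..
  finally show ?thesis .
qed

lemma card_le_sorted_list_of_set_nth:
  fixes A :: "'a::linorder set"
  assumes "finite A" "i < card A"
  shows "i + 1 \<le> card {b \<in> A. b \<le> sorted_list_of_set A ! i}"
proof -
  let ?xs = "sorted_list_of_set A"
  have len: "length ?xs = card A" using assms(1) by simp
  have "card (nth ?xs ` {..i}) = i + 1"
    using inj_on_nth[of ?xs "{..i}"] len assms(2) by (simp add: card_image)
  moreover have "nth ?xs ` {..i} \<subseteq> {b \<in> A. b \<le> ?xs ! i}"
  proof
    fix y assume "y \<in> nth ?xs ` {..i}"
    then obtain j where j: "j \<le> i" "y = ?xs ! j" by auto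
    then have "y \<in> set ?xs" using len assms(2) by simp
    moreover have "y \<le> ?xs ! i" using j sorted_nth_mono[of ?xs j i] len assms(2) by simp
    ultimately show "y \<in> {b \<in> A. b \<le> ?xs ! i}" using assms(1) by simp
  qed
  moreover have "finite {b \<in> A. b \<le> ?xs ! i}" using assms(1) by simp
  ultimately show ?thesis by (metis card_mono)
qed

lemma box_le_one_iff:
  assumes "0 < m" "0 < n"
  shows "real a / real m + real j / real n \<le> 1 \<longleftrightarrow> a * n + j * m \<le> m * n"
proof -
  have "real a / real m + real j / real n = real (a * n + j * m) / real (m * n)"
    using assms by (simp add: field_simps)
  also have "\<dots> \<le> 1 \<longleftrightarrow> real (a * n + j * m) \<le> real (m * n)"
    using assms by (intro divide_le_eq_1_pos) simp
  finally show ?thesis by (simp only: of_nat_le_iff)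
qed

context zn_semimodule
begin

lemma not_m_generator_above:
  assumes "x \<in> D" "x < y" "y mod m = x mod m"
  shows "y \<notin> m_generators m D"
proof -
  obtain j where j: "y - x = m * j" using assms(2,3) mod_eq_dvd_iff_nat[of x y m] by (auto elim: dvdE)
  then have "1 \<le> j" using assms(2) by (cases j) auto
  then have "m * 1 \<le> m * j" by (rule mult_le_mono2)
  then have "m \<le> y" using j assms(2) by linarith
  moreover have "y - m = x + (j - 1) * m" using j assms(2) \<open>1 \<le> j\<close> by (auto simp: algebra_simps diff_mult_distrib2)
  ultimately show ?thesis using add_mult_m_mem[OF assms(1)] unfolding m_generators_def by auto
qed
lemma inj_on_mod_m_generators: "inj_on (\<lambda>a. a mod m) (m_generators m D)"
proof (rule inj_onI)
  fix a b assume gens: "a \<in> m_generators m D" "b \<in> m_generators m D" and "a mod m = b mod m"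
  then have "a \<in> D" "b \<in> D" unfolding m_generators_def by auto
  show "a = b"
  proof (rule ccontr)
    assume "a \<noteq> b"
    then consider "a < b" | "b < a" by arith
    then show False
      using not_m_generator_above \<open>a \<in> D\<close> \<open>b \<in> D\<close> \<open>a mod m = b mod m\<close> gens by cases auto
  qed
qed

lemma ex_m_generator_mod: "s < m \<Longrightarrow> \<exists>a \<in> m_generators m D. a mod m = s"
proof -
  assume "s < m"
  define P where "P x \<longleftrightarrow> x \<in> D \<and> x mod m = s" for x
  have "n * n * k \<le> n * n * k * m + s" using m_ge_1 by (metis le_add1 mult.right_neutral mult_le_mono2 order_trans)
  then have "P (n * n * k * m + s)" unfolding P_def using large_mem \<open>s < m\<close> by simp
  then have Pa: "P (LEAST x. P x)" by (rule LeastI)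
  moreover have "\<not> (m \<le> (LEAST x. P x) \<and> (LEAST x. P x) - m \<in> D)"
  proof
    assume *: "m \<le> (LEAST x. P x) \<and> (LEAST x. P x) - m \<in> D"
    then have "P ((LEAST x. P x) - m)" using Pa unfolding P_def by (metis le_add_diff_inverse2 mod_add_self2)
    moreover have "(LEAST x. P x) - m < (LEAST x. P x)" using * m_ge_1 by simp
    ultimately show False using not_less_Least by blast
  qed
  ultimately show ?thesis unfolding P_def m_generators_def by auto
qed

lemma card_m_generators: "card (m_generators m D) = m"
proof -
  have "(\<lambda>a. a mod m) ` m_generators m D = {..<m}"
    using ex_m_generator_mod m_ge_1 by fastforce
  then show ?thesis using card_image[OF inj_on_mod_m_generators] by simp
qed

lemma length_G_m: "length (G_m m n D) = m"
  unfolding G_m_def using card_m_generators finite_m_generators by simp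

lemma g_fun_Suc_le: "g_fun n D (Suc a) \<le> g_fun n D a"
proof -
  define f where "f z = (if z = a + n then a else z)" for z
  have "inj_on f ({Suc a..<Suc a + n} - D)" unfolding f_def by (rule inj_onI) (auto split: if_splits)
  moreover have "f ` ({Suc a..<Suc a + n} - D) \<subseteq> {a..<a + n} - D"
  proof
    fix y assume "y \<in> f ` ({Suc a..<Suc a + n} - D)"
    then obtain z where z: "z \<in> {Suc a..<Suc a + n} - D" "y = f z" by auto
    show "y \<in> {a..<a + n} - D"
    proof (cases "z = a + n")
      case True
      then have "a \<notin> D" using z add_n_mem by blast
      then show ?thesis using z True n_ge_1 unfolding f_def by auto
    qed (use z in \<open>auto simp: f_def\<close>)
  qed
  ultimately show ?thesis unfolding g_fun_def by (intro card_inj_on_le) auto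
qed

lemma g_fun_antimono: "a \<le> b \<Longrightarrow> g_fun n D b \<le> g_fun n D a"
  by (rule lift_Suc_antimono_le[of "g_fun n D"]) (auto intro: g_fun_Suc_le)

lemma sorted_G_m: "sorted_wrt (\<ge>) (G_m m n D)"
proof -
  have "sorted (sorted_list_of_set (m_generators m D))" by simp
  then have "sorted_wrt (\<lambda>x y. g_fun n D y \<le> g_fun n D x) (sorted_list_of_set (m_generators m D))"
    by (rule sorted_wrt_mono_rel[rotated]) (auto intro: g_fun_antimono)
  then show ?thesis unfolding G_m_def by (simp add: sorted_wrt_map)
qed

lemma shift_ind_le_add:
  assumes "x \<in> Gamma m n"
  shows "shift_ind m D t \<le> shift_ind m D (t + x)"
proof -
  have "t + x - m \<in> D" if "m \<le> t" "t - m \<in> D"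
  proof -
    have "t - m + x \<in> D" using that(2) assms semimodule_D unfolding semimodule_def by blast
    moreover have "t - m + x = t + x - m" using that(1) by simp
    ultimately show ?thesis by simp
  qed
  then show ?thesis unfolding shift_ind_def by auto
qed

lemma window_sum_shift_ind: "window_sum (shift_ind m D) (a + m) n = card (D \<inter> {a..<a + n})"
proof -
  have "window_sum (shift_ind m D) (a + m) n = (\<Sum>z\<in>{a..<a + n}. shift_ind m D (z + m))"
    unfolding window_sum_eq sum_atLeastLessThan_add by (simp add: ac_simps)
  also have "\<dots> = (\<Sum>z\<in>{a..<a + n}. if z \<in> D then 1 else 0)" unfolding shift_ind_def by simp
  also have "\<dots> = card {z \<in> {a..<a + n}. z \<in> D}" by (rule card_filter_eq_sum[symmetric]) simp
  finally show ?thesis by (simp add: Int_def conj_commute)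
qed

text \<open>Each generator \<open>b \<le> a\<close> is moved by a multiple of \<open>m\<close> into \<open>(a, a + m]\<close>; distinct
  generators land on distinct points, since they are distinct modulo \<open>m\<close>.\<close>
lemma card_m_generators_le_window_sum:
  "card {b \<in> m_generators m D. b \<le> a} \<le> window_sum (shift_ind m D) (Suc a) m"
proof -
  define f where "f b = b + m * Suc ((a - b) div m)" for b
  have fmod: "f b mod m = b mod m" for b unfolding f_def by (simp only: mod_mult_self2)
  have "inj_on f {b \<in> m_generators m D. b \<le> a}"
  proof (rule inj_onI)
    fix b b' assume "b \<in> {b \<in> m_generators m D. b \<le> a}" "b' \<in> {b \<in> m_generators m D. b \<le> a}"
      and "f b = f b'"
    moreover from \<open>f b = f b'\<close> have "b mod m = b' mod m" using fmod[of b] fmod[of b'] by simp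
    ultimately show "b = b'" using inj_onD[OF inj_on_mod_m_generators] by blast
  qed
  moreover have "f ` {b \<in> m_generators m D. b \<le> a} \<subseteq> {t \<in> {Suc a..<Suc a + m}. m \<le> t \<and> t - m \<in> D}"
  proof
    fix y assume "y \<in> f ` {b \<in> m_generators m D. b \<le> a}"
    then obtain b where b: "b \<in> m_generators m D" "b \<le> a" "y = f b" by auto
    define q where "q = (a - b) div m"
    have y: "y = b + q * m + m" using b unfolding f_def q_def by (simp add: algebra_simps)
    have "b + q * m \<in> D" using add_mult_m_mem b unfolding m_generators_def by simp
    moreover have "q * m \<le> a - b" "a - b < q * m + m"
      using div_mult_mod_eq[of "a - b" m] mod_less_divisor[of m "a - b"] m_ge_1 unfolding q_def by linarith+
    then have "Suc a \<le> y" "y < Suc a + m" using y b(2) by linarith+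
    ultimately show "y \<in> {t \<in> {Suc a..<Suc a + m}. m \<le> t \<and> t - m \<in> D}" using y by simp
  qed
  ultimately have "card {b \<in> m_generators m D. b \<le> a} \<le> card {t \<in> {Suc a..<Suc a + m}. m \<le> t \<and> t - m \<in> D}"
    by (intro card_inj_on_le) auto
  also have "\<dots> = window_sum (shift_ind m D) (Suc a) m"
    unfolding window_sum_def shift_ind_def by (rule card_filter_eq_sum) simp
  finally show ?thesis .
qed

lemma window_sum_le_card: "n * window_sum (shift_ind m D) (Suc a) m \<le> m * card (D \<inter> {a..<a + n})"
proof -
  let ?W = "window_sum (shift_ind m D)"
  have "m = 1 * m + 0 * n" "n = 0 * m + 1 * n" by simp_all
  then have "m \<in> Gamma m n" "n \<in> Gamma m n" unfolding Gamma_mem_iff by blast+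
  then have mono: "?W c w \<le> ?W c' w" if "c \<le> c'" "w \<in> {m, n}" for c c' w
    using that shift_ind_le_add by (intro window_sum_mono) auto
  have "n * ?W (Suc a) m = (\<Sum>t\<in>{Suc a..<Suc a + n}. ?W (Suc a) m)" by simp
  also have "\<dots> \<le> (\<Sum>t\<in>{Suc a..<Suc a + n}. ?W t m)" by (intro sum_mono mono) auto
  also have "\<dots> = (\<Sum>t\<in>{Suc a..<Suc a + m}. ?W t n)" by (rule sum_window_sum_swap)
  also have "\<dots> \<le> (\<Sum>t\<in>{Suc a..<Suc a + m}. ?W (a + m) n)" by (intro sum_mono mono) auto
  also have "\<dots> = m * card (D \<inter> {a..<a + n})" using window_sum_shift_ind by simp
  finally show ?thesis .
qed

lemma G_m_in_Y: "G_m m n D \<in> Y m n"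
proof -
  let ?xs = "sorted_list_of_set (m_generators m D)"
  have len: "length ?xs = m" using card_m_generators finite_m_generators by simp
  have box: "(i + 1) * n + j * m \<le> m * n" if i: "i < m" and j: "j \<le> G_m m n D ! i" for i j
  proof -
    define a where "a = ?xs ! i"
    have g: "G_m m n D ! i = g_fun n D a" unfolding G_m_def a_def using len i by simp
    have "(i + 1) * n \<le> window_sum (shift_ind m D) (Suc a) m * n"
      using card_le_sorted_list_of_set_nth[OF finite_m_generators, of i] card_m_generators_le_window_sum[of a]
        i card_m_generators unfolding a_def by (intro mult_le_mono1) simp
    also have "\<dots> \<le> m * card (D \<inter> {a..<a + n})" using window_sum_le_card[of a] by (simp add: mult.commute)
    finally have "(i + 1) * n \<le> m * card (D \<inter> {a..<a + n})" .
    moreover have "card (D \<inter> {a..<a + n}) + g_fun n D a = n"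
      using card_Int_Diff[of "{a..<a + n}" D] unfolding g_fun_def by (simp add: Int_commute)
    then have "m * card (D \<inter> {a..<a + n}) + m * g_fun n D a = m * n" by (metis distrib_left)
    moreover have "j * m \<le> g_fun n D a * m" using j g by (intro mult_le_mono1) simp
    then have "j * m \<le> m * g_fun n D a" by (simp add: mult.commute)
    ultimately show ?thesis by linarith
  qed
  have "real (i + 1) / real m + real j / real n \<le> 1" if "i < m" "j \<le> G_m m n D ! i" for i j
    using box_le_one_iff[of m n "i + 1" j] box[OF that] m_ge_1 n_ge_1 by linarith
  then show ?thesis unfolding Y_def using length_G_m sorted_G_m by blast
qed

end

section \<open>From diagrams back to semimodules\<close>

definition columns_ge :: "nat \<Rightarrow> nat list \<Rightarrow> nat \<Rightarrow> nat" where
  "columns_ge m h s = card {i. i < m \<and> s \<le> h ! i}"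

text \<open>The level function of the semimodule with diagram \<open>h\<close>.\<close>
definition diagram_level :: "bool \<Rightarrow> nat \<Rightarrow> nat \<Rightarrow> nat \<Rightarrow> nat list \<Rightarrow> nat \<Rightarrow> nat" where
  "diagram_level e k n m h r =
     (if e then r * k - columns_ge m h (n - r)
      else if r = 0 then 0 else (n - r) * k - columns_ge m h r - 1)"

definition level_set :: "nat \<Rightarrow> (nat \<Rightarrow> nat) \<Rightarrow> nat set" where
  "level_set n u = {x. u (x mod n) \<le> x div n}"

lemma mem_level_set: "r < n \<Longrightarrow> c * n + r \<in> level_set n u \<longleftrightarrow> u r \<le> c"
  unfolding level_set_def by simp

lemma level_level_set: "r < n \<Longrightarrow> level n (level_set n u) r = u r"
  unfolding level_def using mem_level_set[of r n _ u] by (auto intro: Least_equality)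

lemma columns_ge_antimono: "s \<le> s' \<Longrightarrow> columns_ge m h s' \<le> columns_ge m h s"
  unfolding columns_ge_def by (intro card_mono) auto

lemma downward_closed_eq_lessThan:
  assumes "A \<subseteq> {..<(M::nat)}" and "\<And>i j. j < i \<Longrightarrow> i \<in> A \<Longrightarrow> j \<in> A"
  shows "A = {..<card A}"
proof
  have fin: "finite A" using assms(1) finite_subset by blast
  show "A \<subseteq> {..<card A}"
  proof
    fix i assume "i \<in> A"
    then have "{..i} \<subseteq> A" using assms(2) by (auto simp: le_less)
    then have "card {..i} \<le> card A" using fin by (rule card_mono[rotated])
    then show "i \<in> {..<card A}" by simp
  qed
  show "{..<card A} \<subseteq> A"
  proof
    fix i assume i: "i \<in> {..<card A}"
    show "i \<in> A"
    proof (rule ccontr)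
      assume "i \<notin> A"
      then have "A \<subseteq> {..<i}" using assms(2) by (metis lessThan_iff not_less_iff_gr_or_eq subsetI)
      then have "card A \<le> i" using card_mono[of "{..<i}" A] by simp
      then show False using i by simp
    qed
  qed
qed

lemma Y_nth_le_iff_less_columns_ge:
  assumes "h \<in> Y m n" "i < m"
  shows "s \<le> h ! i \<longleftrightarrow> i < columns_ge m h s"
proof -
  have len: "length h = m" and sorted: "sorted_wrt (\<ge>) h" using assms(1) unfolding Y_def by auto
  have "{i. i < m \<and> s \<le> h ! i} = {..<columns_ge m h s}" unfolding columns_ge_def
  proof (rule downward_closed_eq_lessThan[of _ m])
    fix a b assume "b < a" "a \<in> {i. i < m \<and> s \<le> h ! i}"
    moreover from this have "h ! a \<le> h ! b" using sorted_wrt_nth_less[OF sorted, of b a] len by simp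
    ultimately show "b \<in> {i. i < m \<and> s \<le> h ! i}" by auto
  qed auto
  then show ?thesis using assms(2) by (metis (no_types, lifting) lessThan_iff mem_Collect_eq)
qed

context near_multiple
begin

lemma Y_box:
  assumes "h \<in> Y m n" "i < m" "1 \<le> s" "s \<le> h ! i"
  shows "(i + 1) * n + s * m \<le> m * n"
  using assms box_le_one_iff[of m n "i + 1" s] m_ge_1 n_ge_1 unfolding Y_def by auto

lemma Y_nth_less: "h \<in> Y m n \<Longrightarrow> i < m \<Longrightarrow> h ! i < n"
  using Y_box[of h i n] n_ge_1 by (fastforce simp: algebra_simps)

lemma Y_column_bound_plus:
  assumes e "h \<in> Y m n" "i < m" "1 \<le> s" "s \<le> h ! i"
  shows "i + 1 \<le> (n - s) * k"
proof -
  have s: "s < n" using Y_nth_less assms(2-5) by fastforce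
  have "m * n = (n - s) * m + s * m"
  proof -
    have "n = n - s + s" using s by simp
    then show ?thesis by (metis add_mult_distrib mult.commute)
  qed
  then have "(i + 1) * n \<le> (n - s) * m" using Y_box[OF assms(2-5)] by linarith
  also have "\<dots> = (n - s) * k * n + (n - s)" using \<open>e\<close> m_eq unfolding m_of_def by (simp add: algebra_simps)
  also have "\<dots> < (n - s) * k * n + n" using assms(4) s by simp
  also have "\<dots> = ((n - s) * k + 1) * n" by (simp add: algebra_simps)
  finally show ?thesis by (simp only: mult_less_cancel2) simp
qed

lemma Y_column_bound_minus:
  assumes "\<not> e" "h \<in> Y m n" "i < m" "1 \<le> s" "s \<le> h ! i"
  shows "i + 2 \<le> (n - s) * k"
proof -
  have s: "s < n" using Y_nth_less assms(2-5) by fastforce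
  have "m * n = (n - s) * m + s * m"
  proof -
    have "n = n - s + s" using s by simp
    then show ?thesis by (metis add_mult_distrib mult.commute)
  qed
  then have "(i + 1) * n \<le> (n - s) * m" using Y_box[OF assms(2-5)] by linarith
  also have "\<dots> = (n - s) * k * n - (n - s)"
    using \<open>\<not> e\<close> m_eq unfolding m_of_def by (simp add: diff_mult_distrib2 mult.assoc)
  also have "\<dots> < (n - s) * k * n" using s k_ge_1 by (intro diff_less) simp_all
  finally show ?thesis by (simp only: mult_less_cancel2) simp
qed

lemma columns_ge_eq_0: "h \<in> Y m n \<Longrightarrow> n \<le> s \<Longrightarrow> columns_ge m h s = 0"
  unfolding columns_ge_def using Y_nth_less by (fastforce simp: card_eq_0_iff)

lemma columns_ge_le_plus:
  assumes e "h \<in> Y m n" "1 \<le> s"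
  shows "columns_ge m h s \<le> (n - s) * k"
proof -
  have "{i. i < m \<and> s \<le> h ! i} \<subseteq> {..<(n - s) * k}"
  proof
    fix i assume "i \<in> {i. i < m \<and> s \<le> h ! i}"
    then have "i + 1 \<le> (n - s) * k" using Y_column_bound_plus[OF assms(1,2) _ assms(3)] by simp
    then show "i \<in> {..<(n - s) * k}" by simp
  qed
  then have "columns_ge m h s \<le> card {..<(n - s) * k}" unfolding columns_ge_def by (intro card_mono) auto
  then show ?thesis by simp
qed

lemma columns_ge_le_minus:
  assumes "\<not> e" "h \<in> Y m n" "1 \<le> s" "s < n"
  shows "columns_ge m h s + 1 \<le> (n - s) * k"
proof -
  have "{i. i < m \<and> s \<le> h ! i} \<subseteq> {..<(n - s) * k - 1}"
  proof
    fix i assume "i \<in> {i. i < m \<and> s \<le> h ! i}"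
    then have "i + 2 \<le> (n - s) * k" using Y_column_bound_minus[OF assms(1,2) _ assms(3)] by simp
    then show "i \<in> {..<(n - s) * k - 1}" by simp
  qed
  then have "columns_ge m h s \<le> card {..<(n - s) * k - 1}" unfolding columns_ge_def by (intro card_mono) auto
  then have "columns_ge m h s \<le> (n - s) * k - 1" by simp
  moreover have "1 \<le> (n - s) * k" using assms(4) k_ge_1 by simp
  ultimately show ?thesis by linarith
qed

lemma admissible_diagram_level:
  assumes "h \<in> Y m n"
  shows "admissible e k n (diagram_level e k n m h)"
proof (cases e)
  case True
  have "diagram_level e k n m h r \<le> diagram_level e k n m h (r - 1) + k" if r: "0 < r" "r < n" for r
  proof -
    have "columns_ge m h (n - (r - 1)) \<le> columns_ge m h (n - r)" using r by (intro columns_ge_antimono) simp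
    moreover have "columns_ge m h (n - (r - 1)) \<le> (r - 1) * k"
      using columns_ge_le_plus[OF True assms, of "n - (r - 1)"] r by simp
    moreover have "r = Suc (r - 1)" using r by simp
    then have "(r - 1) * k + k = r * k" by (metis add.commute mult_Suc)
    moreover have "diagram_level e k n m h r = r * k - columns_ge m h (n - r)"
      "diagram_level e k n m h (r - 1) = (r - 1) * k - columns_ge m h (n - (r - 1))"
      unfolding diagram_level_def using True by simp_all
    ultimately show ?thesis by linarith
  qed
  then show ?thesis unfolding admissible_def using True by (simp add: diagram_level_def)
next
  case False
  have "diagram_level e k n m h r \<le> diagram_level e k n m h (Suc r) + k" if r: "Suc r < n" for r
  proof (cases "r = 0")
    case r0: False
    have "columns_ge m h (Suc r) \<le> columns_ge m h r" by (intro columns_ge_antimono) simp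
    moreover have "columns_ge m h (Suc r) + 1 \<le> (n - Suc r) * k"
      using columns_ge_le_minus[OF False assms, of "Suc r"] r by simp
    moreover have "n - r = Suc (n - Suc r)" using r by simp
    then have "(n - Suc r) * k + k = (n - r) * k" by simp
    ultimately show ?thesis unfolding diagram_level_def using False r0 by simp
  qed (simp add: diagram_level_def False)
  moreover have "diagram_level e k n m h (n - 1) \<le> k - 1"
    unfolding diagram_level_def using False n_ge_1 by (cases "n - 1 = 0") (auto simp: diff_diff_cancel)
  ultimately show ?thesis unfolding admissible_def using False by (simp add: diagram_level_def)
qed

lemma level_set_add_m:
  assumes "admissible e k n u" "x \<in> level_set n u"
  shows "x + m \<in> level_set n u"
proof -
  define q r where "q = x div n" and "r = x mod n"
  have x: "x = q * n + r" and r: "r < n" unfolding q_def r_def using n_ge_1 by simp_all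
  have u: "u r \<le> q" using assms(2) unfolding level_set_def q_def r_def by simp
  have kn: "1 \<le> k * n" using k_ge_1 n_ge_1 by simp
  consider "e" "Suc r < n" | "e" "Suc r = n" | "\<not> e" "0 < r" | "\<not> e" "r = 0"
    using r by linarith
  then show ?thesis
  proof cases
    case 1
    then have eq: "x + m = (q + k) * n + Suc r" using x m_eq unfolding m_of_def by (simp add: algebra_simps)
    have "(q + k) * n + Suc r \<in> level_set n u"
      using mem_level_set[OF 1(2), of "q + k" u] u admissibleD_plus[OF assms(1) 1(1), of "Suc r"] 1(2) by simp
    then show ?thesis unfolding eq .
  next
    case 2
    then have eq: "x + m = (q + k + 1) * n + 0" using x m_eq unfolding m_of_def by (simp add: algebra_simps)
    have "(q + k + 1) * n + 0 \<in> level_set n u"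
      using mem_level_set[of 0 n "q + k + 1" u] admissibleD_zero[OF assms(1)] n_ge_1 by simp
    then show ?thesis unfolding eq .
  next
    case 3
    have "m + 1 = k * n" "(q + k) * n = q * n + k * n" using 3 m_eq kn unfolding m_of_def
      by (simp_all add: algebra_simps)
    then have eq: "x + m = (q + k) * n + (r - 1)" using x 3 by linarith
    have "u (r - 1) \<le> u r + k" using admissibleD_minus[OF assms(1) \<open>\<not> e\<close>, of "r - 1"] 3 r by simp
    then have "(q + k) * n + (r - 1) \<in> level_set n u"
      using mem_level_set[of "r - 1" n "q + k" u] u r by simp
    then show ?thesis unfolding eq .
  next
    case 4
    have "q + k - 1 + 1 = q + k" using k_ge_1 by simp
    then have "(q + k - 1) * n + 1 * n = q * n + k * n" by (metis add_mult_distrib)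
    moreover have "m + 1 = k * n" using 4 m_eq kn unfolding m_of_def by simp
    ultimately have eq: "x + m = (q + k - 1) * n + (n - 1)" using x 4 n_ge_1 by simp
    have "(q + k - 1) * n + (n - 1) \<in> level_set n u"
      using mem_level_set[of "n - 1" n "q + k - 1" u] admissibleD_minus_last[OF assms(1) \<open>\<not> e\<close>] n_ge_1
      by simp
    then show ?thesis unfolding eq .
  qed
qed

lemma level_set_zn_semimodule:
  assumes "admissible e k n u"
  shows "zn_semimodule e k n m (level_set n u)"
proof -
  have add_n: "y + b * n \<in> level_set n u" if "y \<in> level_set n u" for y b
    using that n_ge_1 unfolding level_set_def by simp
  have add_m: "y + a * m \<in> level_set n u" if "y \<in> level_set n u" for y a
    using that
  proof (induction a arbitrary: y)
    case (Suc a)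
    have "y + m + a * m \<in> level_set n u" using Suc.IH[OF level_set_add_m[OF assms Suc.prems]] .
    then show ?case by (simp add: add.assoc)
  qed simp
  have "semimodule m n (level_set n u)"
    unfolding semimodule_def
  proof (intro ballI)
    fix x g assume "x \<in> level_set n u" "g \<in> Gamma m n"
    then obtain a b where "g = a * m + b * n" unfolding Gamma_mem_iff by blast
    then show "x + g \<in> level_set n u" using add_n[OF add_m[OF \<open>x \<in> level_set n u\<close>]] by (simp add: add.assoc)
  qed
  moreover have "0 \<in> level_set n u" using admissibleD_zero[OF assms] unfolding level_set_def by simp
  then have "zero_normalized (level_set n u)" unfolding zero_normalized_def by (auto intro: Least_equality)
  ultimately show ?thesis by unfold_locales
qed

lemma columns_ge_eq_if_diagram_level_eq:
  assumes "h \<in> Y m n" "h' \<in> Y m n" "\<forall>r<n. diagram_level e k n m h r = diagram_level e k n m h' r"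
    and "1 \<le> s"
  shows "columns_ge m h s = columns_ge m h' s"
proof (cases "s < n")
  case True
  show ?thesis
  proof (cases e)
    case True
    then have "diagram_level e k n m h (n - s) = diagram_level e k n m h' (n - s)"
      using assms(3,4) \<open>s < n\<close> by simp
    then show ?thesis using True \<open>s < n\<close> columns_ge_le_plus[OF True assms(1,4)]
      columns_ge_le_plus[OF True assms(2,4)] unfolding diagram_level_def by simp
  next
    case False
    then have "diagram_level e k n m h s = diagram_level e k n m h' s" using assms(3) \<open>s < n\<close> by simp
    then show ?thesis using False assms(4) columns_ge_le_minus[OF False assms(1,4) \<open>s < n\<close>]
      columns_ge_le_minus[OF False assms(2,4) \<open>s < n\<close>] unfolding diagram_level_def by simp
  qed
qed (use assms columns_ge_eq_0 in simp)

lemma level_set_diagram_level_inj: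
  assumes "h \<in> Y m n" "h' \<in> Y m n"
    and "level_set n (diagram_level e k n m h) = level_set n (diagram_level e k n m h')"
  shows "h = h'"
proof (rule nth_equalityI)
  show "length h = length h'" using assms(1,2) unfolding Y_def by simp
next
  fix i assume "i < length h"
  then have i: "i < m" using assms(1) unfolding Y_def by simp
  have "\<forall>r<n. diagram_level e k n m h r = diagram_level e k n m h' r"
    using assms(3) level_level_set by metis
  then have iff: "s \<le> h ! i \<longleftrightarrow> s \<le> h' ! i" if "1 \<le> s" for s
    using Y_nth_le_iff_less_columns_ge[OF _ i] columns_ge_eq_if_diagram_level_eq[OF assms(1,2) _ that] assms(1,2)
    by simp
  show "h ! i = h' ! i"
  proof (rule antisym)
    show "h ! i \<le> h' ! i" using iff[of "h ! i"] by (cases "h ! i = 0") auto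
    show "h' ! i \<le> h ! i" using iff[of "h' ! i"] by (cases "h' ! i = 0") auto
  qed
qed

lemma finite_Y: "finite (Y m n)"
proof (rule finite_subset)
  show "Y m n \<subseteq> {xs. set xs \<subseteq> {..<n} \<and> length xs = m}"
    using Y_nth_less unfolding Y_def by (auto simp: in_set_conv_nth)
  show "finite {xs. set xs \<subseteq> {..<n} \<and> length xs = m}" by (rule finite_lists_length_eq) simp
qed

end

section \<open>The bijection\<close>

lemma bij_betw_if_inj_on_both_ways:
  assumes "inj_on f A" "f ` A \<subseteq> B" "inj_on g B" "g ` B \<subseteq> A" "finite B"
  shows "bij_betw f A B"
proof -
  have "finite A" using assms(1,2,5) by (metis finite_imageD finite_subset)
  then have "card B \<le> card (f ` A)" using card_inj_on_le[OF assms(3,4)] card_image[OF assms(1)] by simp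
  then have "f ` A = B" using card_seteq[OF assms(5,2)] by simp
  with assms(1) show ?thesis unfolding bij_betw_def by simp
qed

theorem mainTheorem2:
  fixes m n k :: nat
  assumes "n \<ge> 1" and "k \<ge> 1" and "m = k * n + 1 \<or> m = k * n - 1" and "m \<ge> 1"
  shows "bij_betw (G_m m n) {D. semimodule m n D \<and> zero_normalized D} (Y m n)"
proof -
  define e where "e = (m = k * n + 1)"
  have params: "near_multiple e k n m"
    using assms unfolding e_def by unfold_locales (auto simp: m_of_def)
  interpret near_multiple e k n m by (rule params)
  have S: "D \<in> {D. semimodule m n D \<and> zero_normalized D} \<longleftrightarrow> zn_semimodule e k n m D" for D
    using params unfolding zn_semimodule_def zn_semimodule_axioms_def by simp
  show ?thesis
  proof (rule bij_betw_if_inj_on_both_ways)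
    show "inj_on (G_m m n) {D. semimodule m n D \<and> zero_normalized D}"
      using G_m_inj S by (auto intro: inj_onI)
    show "G_m m n ` {D. semimodule m n D \<and> zero_normalized D} \<subseteq> Y m n"
      using zn_semimodule.G_m_in_Y S by blast
    show "inj_on (\<lambda>h. level_set n (diagram_level e k n m h)) (Y m n)"
      using level_set_diagram_level_inj by (auto intro: inj_onI)
    show "(\<lambda>h. level_set n (diagram_level e k n m h)) ` Y m n \<subseteq> {D. semimodule m n D \<and> zero_normalized D}"
      using level_set_zn_semimodule[OF admissible_diagram_level] S by blast
  qed (rule finite_Y)
qed

end
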